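(* Let $x\in\mathbb{R}\setminus\mathbb{Q}$. Then $\gamma(x)=\tau(2x)$, where, for an irrational $y$ with continued fraction convergents $p_n/q_n$ ($n\in\mathbb{N}$), \[\tau(y)=\sup\Big\{\tau : \Big|y-\tfrac{p_n}{q_n}\Big|<\tfrac{1}{q_n^{\tau}} \text{ for infinitely many convergents } \tfrac{p_n}{q_n}\text{ of } y \text{ with } p_n,q_n \text{ not both odd}\Big\},\] \[\gamma(y)=\sup\Big\{\gamma : \Big|y-\tfrac{p_n}{q_n}\Big|<\tfrac{1}{q_n^{\gamma}} \text{ for infinitely many } n\in\mathbb{N} \text{ with } q_n\equiv 0,1,3 \pmod 4\Big\}.\]
   Context: The convergents $p_n/q_n$ of an irrational number are the (irreducible) partial quotients of its regular continued fraction expansion. *)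

theory Defs
  imports Complex_Main "HOL-Library.Extended_Real"
begin

fun cf_rem :: "real \<Rightarrow> nat \<Rightarrow> real" where
  "cf_rem y 0 = y"
| "cf_rem y (Suc n) = 1 / (cf_rem y n - of_int \<lfloor>cf_rem y n\<rfloor>)"

definition cf_a :: "real \<Rightarrow> nat \<Rightarrow> int" where
  "cf_a y n = \<lfloor>cf_rem y n\<rfloor>"

fun cf_p :: "real \<Rightarrow> nat \<Rightarrow> int" where
  "cf_p y 0 = cf_a y 0"
| "cf_p y (Suc 0) = cf_a y 1 * cf_a y 0 + 1"
| "cf_p y (Suc (Suc n)) = cf_a y (Suc (Suc n)) * cf_p y (Suc n) + cf_p y n"

fun cf_q :: "real \<Rightarrow> nat \<Rightarrow> int" where
  "cf_q y 0 = 1"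
| "cf_q y (Suc 0) = cf_a y 1"
| "cf_q y (Suc (Suc n)) = cf_a y (Suc (Suc n)) * cf_q y (Suc n) + cf_q y n"

definition tau_exp :: "real \<Rightarrow> ereal" where
  "tau_exp y = Sup (ereal ` {t :: real. infinite {n. \<not> (odd (cf_p y n) \<and> odd (cf_q y n)) \<and>
       \<bar>y - of_int (cf_p y n) / of_int (cf_q y n)\<bar> < 1 / (of_int (cf_q y n)) powr t}})"

definition gamma_exp :: "real \<Rightarrow> ereal" where
  "gamma_exp y = Sup (ereal ` {g :: real. infinite {n. cf_q y n mod 4 \<in> {0, 1, 3} \<and>
       \<bar>y - of_int (cf_p y n) / of_int (cf_q y n)\<bar> < 1 / (of_int (cf_q y n)) powr g}})"

end

theory Submission
  imports Defs
begin

(* A reduced fraction p/q with q mod 4 in {0, 1, 3} corresponds to the reduced fraction 2p/q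
   written as P/Q with P, Q not both odd: for odd q take P/Q = 2p/q, for 4 dvd q take
   P/Q = p/(q/2); conversely halve P/Q.  (The excluded class q mod 4 = 2 is exactly the one
   whose doubles are odd/odd.)  The error of P/Q against 2x is twice that of p/q against x and
   the denominators differ by a factor at most 2, so an exponent above 2 survives the passage
   up to an arbitrarily small loss, and by Legendre's theorem the new approximations are again
   convergents.  Exponents up to 2 are attained on both sides because of two consecutive
   convergents one has odd denominator and one is not odd/odd. *)

declare cf_rem.simps(2) [simp del]

lemma cf_rem_Suc: "cf_rem y (Suc n) = 1 / (cf_rem y n - of_int (cf_a y n))"
  by (simp add: cf_a_def cf_rem.simps(2))

lemma cf_rem_irrational:
  assumes "y \<notin> \<rat>"
  shows "cf_rem y n \<notin> \<rat>"
proof (induction n)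
  case 0
  then show ?case using assms by simp
next
  case (Suc n)
  show ?case
  proof
    assume "cf_rem y (Suc n) \<in> \<rat>"
    then have "inverse (cf_rem y (Suc n)) + of_int (cf_a y n) \<in> \<rat>"
      by (intro Rats_add Rats_inverse) auto
    with Suc show False
      by (simp add: cf_rem_Suc inverse_eq_divide)
  qed
qed

lemma cf_rem_minus_cf_a_bounds:
  assumes "y \<notin> \<rat>"
  shows "0 < cf_rem y n - of_int (cf_a y n)" "cf_rem y n - of_int (cf_a y n) < 1"
proof -
  have "cf_rem y n \<noteq> of_int (cf_a y n)"
    using cf_rem_irrational[OF assms, of n] by auto
  then show "0 < cf_rem y n - of_int (cf_a y n)" "cf_rem y n - of_int (cf_a y n) < 1"
    unfolding cf_a_def by linarith+
qed

lemma cf_rem_Suc_gt_1: "y \<notin> \<rat> \<Longrightarrow> 1 < cf_rem y (Suc n)"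
  using cf_rem_minus_cf_a_bounds[of y n] by (simp add: cf_rem_Suc)

lemma cf_a_Suc_ge_1: "y \<notin> \<rat> \<Longrightarrow> 1 \<le> cf_a y (Suc n)"
  using cf_rem_Suc_gt_1[of y n] unfolding cf_a_def by linarith

lemma cf_q_Suc_Suc_ge:
  assumes "y \<notin> \<rat>" "0 \<le> cf_q y (Suc n)"
  shows "cf_q y (Suc n) + cf_q y n \<le> cf_q y (Suc (Suc n))"
proof -
  have "1 * cf_q y (Suc n) \<le> cf_a y (Suc (Suc n)) * cf_q y (Suc n)"
    using cf_a_Suc_ge_1[OF assms(1)] assms(2) by (rule mult_right_mono)
  then show ?thesis by simp
qed

lemma cf_q_pos_le_Suc:
  assumes "y \<notin> \<rat>"
  shows "1 \<le> cf_q y n \<and> cf_q y n \<le> cf_q y (Suc n)"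
proof (induction n)
  case 0
  show ?case using cf_a_Suc_ge_1[OF assms, of 0] by simp
next
  case (Suc n)
  then have "0 \<le> cf_q y (Suc n)" by linarith
  from cf_q_Suc_Suc_ge[OF assms this] Suc show ?case by linarith
qed

lemma cf_q_pos: "y \<notin> \<rat> \<Longrightarrow> 1 \<le> cf_q y n"
  using cf_q_pos_le_Suc by blast

lemma cf_q_mono:
  assumes "y \<notin> \<rat>" "m \<le> n"
  shows "cf_q y m \<le> cf_q y n"
  by (rule lift_Suc_mono_le[OF _ assms(2)]) (use cf_q_pos_le_Suc[OF assms(1)] in blast)

lemma cf_q_ge_index:
  assumes "y \<notin> \<rat>"
  shows "int n \<le> cf_q y n"
proof -
  have "int n \<le> cf_q y n \<and> int n + 1 \<le> cf_q y (Suc n)"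
  proof (induction n)
    case 0
    show ?case using cf_a_Suc_ge_1[OF assms, of 0] by simp
  next
    case (Suc n)
    have "0 \<le> cf_q y (Suc n)" using cf_q_pos[OF assms, of "Suc n"] by linarith
    from cf_q_Suc_Suc_ge[OF assms this] Suc cf_q_pos[OF assms, of n] show ?case by linarith
  qed
  then show ?thesis ..
qed

lemma cf_det: "cf_p y (Suc n) * cf_q y n - cf_p y n * cf_q y (Suc n) = (-1) ^ n"
proof (induction n)
  case 0
  show ?case by simp
next
  case (Suc n)
  have "cf_p y (Suc (Suc n)) * cf_q y (Suc n) - cf_p y (Suc n) * cf_q y (Suc (Suc n))
      = - (cf_p y (Suc n) * cf_q y n - cf_p y n * cf_q y (Suc n))"
    by (simp add: algebra_simps)
  with Suc show ?case by simp
qed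

lemma dvd_cf_det_imp_unit:
  assumes "c dvd cf_p y (Suc n) * cf_q y n - cf_p y n * cf_q y (Suc n)"
  shows "is_unit c"
  using assms unfolding cf_det by (rule dvd_unit_imp_unit) simp

lemma coprime_cf_p_cf_q: "coprime (cf_p y n) (cf_q y n)"
  by (rule coprimeI, rule dvd_cf_det_imp_unit[of _ y n]) auto

lemma coprime_cf_q_Suc: "coprime (cf_q y n) (cf_q y (Suc n))"
  by (rule coprimeI, rule dvd_cf_det_imp_unit[of _ y n]) auto

lemma odd_cf_q_or_Suc: "odd (cf_q y n) \<or> odd (cf_q y (Suc n))"
  using coprime_cf_q_Suc[of y n] by auto

lemma cf_not_both_odd_or_Suc:
  "\<not> (odd (cf_p y n) \<and> odd (cf_q y n)) \<or> \<not> (odd (cf_p y (Suc n)) \<and> odd (cf_q y (Suc n)))"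
proof (rule ccontr)
  assume "\<not> ?thesis"
  then have "even (cf_p y (Suc n) * cf_q y n - cf_p y n * cf_q y (Suc n))" by simp
  then show False unfolding cf_det by simp
qed

definition cf_err :: "real \<Rightarrow> nat \<Rightarrow> real" where
  "cf_err y n = of_int (cf_q y n) * y - of_int (cf_p y n)"

lemma cf_err_det:
  "of_int (cf_q y (Suc n)) * cf_err y n - of_int (cf_q y n) * cf_err y (Suc n) = (-1) ^ n"
proof -
  have "real_of_int (cf_p y (Suc n) * cf_q y n - cf_p y n * cf_q y (Suc n)) = (-1) ^ n"
    unfolding cf_det by simp
  then show ?thesis by (simp add: cf_err_def algebra_simps)
qed

lemma cf_err_nonzero:
  assumes "y \<notin> \<rat>"
  shows "cf_err y n \<noteq> 0"
proof
  assume "cf_err y n = 0"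
  then have "y = of_int (cf_p y n) / of_int (cf_q y n)"
    using cf_q_pos[OF assms, of n] by (simp add: cf_err_def field_simps)
  with assms show False by (metis Rats_divide Rats_of_int)
qed

lemma cf_err_Suc_mult_cf_rem:
  assumes "y \<notin> \<rat>"
  shows "cf_err y (Suc n) * cf_rem y (Suc (Suc n)) = - cf_err y n"
proof (induction n)
  case 0
  define z where "z = y - of_int (cf_a y 0)"
  define a where "a = real_of_int (cf_a y 1)"
  have z: "z \<noteq> 0" "1 / z - a \<noteq> 0"
    using cf_rem_minus_cf_a_bounds[OF assms, of 0] cf_rem_minus_cf_a_bounds[OF assms, of 1]
    by (simp_all add: z_def a_def cf_rem_Suc)
  then have az: "1 - a * z \<noteq> 0"
    by (simp add: field_simps)
  have "cf_rem y (Suc (Suc 0)) = z / (1 - a * z)"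
    using z by (simp add: cf_rem_Suc z_def a_def field_simps)
  moreover have "cf_err y (Suc 0) = a * z - 1" "cf_err y 0 = z"
    by (simp_all add: cf_err_def a_def z_def algebra_simps)
  moreover have "(a * z - 1) * (z / (1 - a * z)) = - z"
    using az by (simp add: field_simps)
  ultimately show ?case by simp
next
  case (Suc n)
  define a where "a = real_of_int (cf_a y (Suc (Suc n)))"
  define r where "r = cf_rem y (Suc (Suc n))"
  have "cf_err y (Suc (Suc n)) = a * cf_err y (Suc n) + cf_err y n"
    by (simp add: cf_err_def a_def algebra_simps)
  also have "cf_err y n = - cf_err y (Suc n) * r"
    using Suc by (simp add: r_def)
  finally have "cf_err y (Suc (Suc n)) = - cf_err y (Suc n) * (r - a)"
    by (simp add: algebra_simps)
  moreover have "r - a \<noteq> 0"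
    using cf_rem_minus_cf_a_bounds[OF assms, of "Suc (Suc n)"] by (simp add: a_def r_def)
  moreover have "cf_rem y (Suc (Suc (Suc n))) = 1 / (r - a)"
    by (simp add: cf_rem_Suc[of y "Suc (Suc n)"] a_def r_def)
  ultimately show ?case by simp
qed

lemma cf_err_alternating:
  assumes "y \<notin> \<rat>"
  shows "cf_err y n * cf_err y (Suc n) < 0"
proof -
  have "cf_err y n * cf_err y (Suc n) * cf_rem y (Suc (Suc n)) = - (cf_err y n)\<^sup>2"
    by (simp add: cf_err_Suc_mult_cf_rem[OF assms] power2_eq_square mult.assoc)
  also have "\<dots> < 0"
    using cf_err_nonzero[OF assms] by simp
  finally show ?thesis
    using cf_rem_Suc_gt_1[OF assms, of "Suc n"] by (simp add: mult_less_0_iff)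
qed

lemma abs_add_eq_if_mult_nonneg:
  fixes a b :: "'a :: linordered_idom"
  assumes "0 \<le> a * b"
  shows "\<bar>a + b\<bar> = \<bar>a\<bar> + \<bar>b\<bar>"
  using assms by (auto simp: zero_le_mult_iff abs_if)

lemma abs_cf_err_less:
  assumes "y \<notin> \<rat>"
  shows "\<bar>cf_err y n\<bar> * of_int (cf_q y (Suc n)) < 1"
proof -
  have q: "0 < real_of_int (cf_q y n)" "0 < real_of_int (cf_q y (Suc n))"
    using cf_q_pos[OF assms] by (simp_all add: int_one_le_iff_zero_less)
  have "0 \<le> (of_int (cf_q y (Suc n)) * of_int (cf_q y n)) * - (cf_err y n * cf_err y (Suc n))"
    using q cf_err_alternating[OF assms, of n] by (intro mult_nonneg_nonneg) auto
  then have same_sign: "0 \<le> (of_int (cf_q y (Suc n)) * cf_err y n) * - (of_int (cf_q y n) * cf_err y (Suc n))"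
    by (simp add: algebra_simps)
  have "1 = \<bar>of_int (cf_q y (Suc n)) * cf_err y n - of_int (cf_q y n) * cf_err y (Suc n)\<bar>"
    by (simp add: cf_err_det)
  also have "\<dots> = \<bar>of_int (cf_q y (Suc n)) * cf_err y n\<bar> + \<bar>of_int (cf_q y n) * cf_err y (Suc n)\<bar>"
    using abs_add_eq_if_mult_nonneg[OF same_sign] by simp
  finally have "1 = \<bar>of_int (cf_q y (Suc n)) * cf_err y n\<bar> + \<bar>of_int (cf_q y n) * cf_err y (Suc n)\<bar>" .
  moreover have "0 < \<bar>of_int (cf_q y n) * cf_err y (Suc n)\<bar>"
    using q cf_err_nonzero[OF assms, of "Suc n"] by simp
  moreover have "\<bar>cf_err y n\<bar> * of_int (cf_q y (Suc n)) = \<bar>of_int (cf_q y (Suc n)) * cf_err y n\<bar>"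
    using q by (simp add: abs_mult)
  ultimately show ?thesis by linarith
qed

text \<open>Unimodularity writes (P, Q) = u (p_n, q_n) + v (p_(n+1), q_(n+1)) with integers u, v;
  then 0 < Q < q_(n+1) forces u \<noteq> 0 and u v \<le> 0, so the two error terms have the same sign.\<close>

lemma cf_err_best_approx:
  assumes y: "y \<notin> \<rat>" and Q: "0 < Q" "Q < cf_q y (Suc n)"
  shows "\<bar>cf_err y n\<bar> \<le> \<bar>of_int Q * y - of_int P\<bar>"
proof -
  define d :: int where "d = (-1) ^ n"
  have det: "cf_p y (Suc n) * cf_q y n - cf_p y n * cf_q y (Suc n) = d" and "d * d = 1"
    by (simp_all add: cf_det d_def flip: power_add)
  define u where "u = d * (cf_p y (Suc n) * Q - P * cf_q y (Suc n))"
  define v where "v = d * (P * cf_q y n - cf_p y n * Q)"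
  have PQ: "Q = u * cf_q y n + v * cf_q y (Suc n)" "P = u * cf_p y n + v * cf_p y (Suc n)"
    using det \<open>d * d = 1\<close> unfolding u_def v_def by (simp_all add: algebra_simps)
  then have err: "of_int Q * y - of_int P = of_int u * cf_err y n + of_int v * cf_err y (Suc n)"
    by (simp add: cf_err_def algebra_simps)
  have q: "1 \<le> cf_q y n" "1 \<le> cf_q y (Suc n)"
    using cf_q_pos[OF y] by auto
  have "u \<noteq> 0"
  proof
    assume "u = 0"
    then have "Q = v * cf_q y (Suc n)" using PQ by simp
    moreover from this have "0 < v" using Q q by (simp add: zero_less_mult_iff)
    ultimately have "cf_q y (Suc n) \<le> Q" using q by simp
    with Q show False by simp
  qed
  have "u * v \<le> 0"
  proof (rule ccontr)
    assume "\<not> u * v \<le> 0"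
    then have "0 < u * v" by simp
    then consider "0 < u" "0 < v" | "u < 0" "v < 0"
      unfolding zero_less_mult_iff by blast
    then show False
    proof cases
      case 1
      then have "0 < u * cf_q y n" "cf_q y (Suc n) \<le> v * cf_q y (Suc n)" using q by simp_all
      with PQ(1) Q show False by linarith
    next
      case 2
      then have "u * cf_q y n < 0" "v * cf_q y (Suc n) < 0" using q by (simp_all add: mult_neg_pos)
      with PQ(1) Q show False by linarith
    qed
  qed
  then have "0 \<le> real_of_int (u * v) * (cf_err y n * cf_err y (Suc n))"
    using cf_err_alternating[OF y, of n] by (intro mult_nonpos_nonpos) (auto simp flip: of_int_mult)
  then have "0 \<le> (of_int u * cf_err y n) * (of_int v * cf_err y (Suc n))"
    by (simp add: algebra_simps)
  then have "\<bar>of_int Q * y - of_int P\<bar> = \<bar>of_int u * cf_err y n\<bar> + \<bar>of_int v * cf_err y (Suc n)\<bar>"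
    unfolding err by (rule abs_add_eq_if_mult_nonneg)
  moreover have "\<bar>cf_err y n\<bar> \<le> \<bar>of_int u * cf_err y n\<bar>"
  proof -
    have "1 \<le> \<bar>real_of_int u\<bar>"
      using \<open>u \<noteq> 0\<close> by linarith
    then show ?thesis
      by (simp add: abs_mult mult_le_cancel_right1)
  qed
  ultimately show ?thesis by simp
qed

lemma cf_q_bracket:
  assumes y: "y \<notin> \<rat>" and "1 \<le> Q"
  obtains n where "cf_q y n \<le> Q" "Q < cf_q y (Suc n)"
proof -
  define m where "m = (LEAST m. Q < cf_q y m)"
  have "Q < cf_q y (Suc (nat Q))"
    using cf_q_ge_index[OF y, of "Suc (nat Q)"] \<open>1 \<le> Q\<close> by simp
  then have m: "Q < cf_q y m"
    unfolding m_def by (rule LeastI)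
  with \<open>1 \<le> Q\<close> have "m \<noteq> 0"
    by (cases m) auto
  then obtain n where "m = Suc n"
    using not0_implies_Suc by blast
  moreover have "cf_q y n \<le> Q"
    using not_less_Least[of n "\<lambda>m. Q < cf_q y m"] \<open>m = Suc n\<close> by (simp add: m_def)
  ultimately show ?thesis
    using m that by simp
qed

lemma cf_q_less_imp_index_less:
  assumes "y \<notin> \<rat>" "cf_q y m < cf_q y n"
  shows "m < n"
  using cf_q_mono[OF assms(1), of n m] assms(2) by (cases "m < n") auto

text \<open>If q_n \<le> Q < q_(n+1), the best approximation property bounds \<bar>P q_n - p_n Q\<bar> by
  2 Q \<bar>Q y - P\<bar>, an integer below 1.\<close>

lemma cf_cross_eq_if_close:
  assumes y: "y \<notin> \<rat>" and Q: "0 < Q" "cf_q y n \<le> Q" "Q < cf_q y (Suc n)"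
    and close: "2 * of_int Q * \<bar>of_int Q * y - of_int P\<bar> < 1"
  shows "P * cf_q y n = cf_p y n * Q"
proof (rule ccontr)
  define e where "e = \<bar>of_int Q * y - of_int P\<bar>"
  assume "P * cf_q y n \<noteq> cf_p y n * Q"
  then have "1 \<le> \<bar>real_of_int (P * cf_q y n - cf_p y n * Q)\<bar>"
    by linarith
  also have "real_of_int (P * cf_q y n - cf_p y n * Q)
      = of_int Q * cf_err y n - of_int (cf_q y n) * (of_int Q * y - of_int P)"
    by (simp add: cf_err_def algebra_simps)
  also have "\<bar>\<dots>\<bar> \<le> \<bar>of_int Q * cf_err y n\<bar> + \<bar>of_int (cf_q y n) * (of_int Q * y - of_int P)\<bar>"
    by (rule abs_triangle_ineq4)
  also have "\<dots> = of_int Q * \<bar>cf_err y n\<bar> + of_int (cf_q y n) * e"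
    using Q(1) cf_q_pos[OF y, of n] by (simp add: e_def abs_mult)
  also have "\<dots> \<le> of_int Q * e + of_int Q * e"
    using cf_err_best_approx[OF y Q(1,3)] Q(1,2)
    by (intro add_mono mult_left_mono mult_right_mono) (auto simp: e_def)
  finally show False
    using close by (simp add: e_def algebra_simps)
qed

theorem legendre_convergent:
  assumes y: "y \<notin> \<rat>" and "0 < Q" "coprime P Q"
    and approx: "\<bar>y - of_int P / of_int Q\<bar> < 1 / (2 * of_int Q ^ 2)"
  obtains n where "cf_p y n = P" "cf_q y n = Q"
proof -
  obtain n where n: "cf_q y n \<le> Q" "Q < cf_q y (Suc n)"
    using cf_q_bracket[OF y] \<open>0 < Q\<close> by (metis int_one_le_iff_zero_less)
  have Q: "0 < real_of_int Q"
    using \<open>0 < Q\<close> by simp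
  have "\<bar>of_int Q * y - of_int P\<bar> = of_int Q * \<bar>y - of_int P / of_int Q\<bar>"
    using Q by (simp add: abs_mult [symmetric] field_simps)
  also have "\<dots> < of_int Q * (1 / (2 * of_int Q ^ 2))"
    using approx Q by (rule mult_strict_left_mono)
  finally have "2 * of_int Q * \<bar>of_int Q * y - of_int P\<bar> < 1"
    using Q by (simp add: field_simps power2_eq_square)
  then have "P * cf_q y n = cf_p y n * Q"
    using cf_cross_eq_if_close[OF y \<open>0 < Q\<close> n] by blast
  then have "P = cf_p y n \<and> Q = cf_q y n"
    using coprime_crossproduct'[where a = P and b = Q and c = "cf_p y n" and d = "cf_q y n"]
      \<open>0 < Q\<close> cf_q_pos[OF y, of n] \<open>coprime P Q\<close> coprime_cf_p_cf_q[of y n]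
    by (simp add: mult.commute)
  then show ?thesis
    using that by simp
qed

lemma abs_cf_approx_less_powr:
  assumes y: "y \<notin> \<rat>" and "t \<le> 2"
  shows "\<bar>y - of_int (cf_p y n) / of_int (cf_q y n)\<bar> < 1 / of_int (cf_q y n) powr t"
proof -
  define q where "q = real_of_int (cf_q y n)"
  define q' where "q' = real_of_int (cf_q y (Suc n))"
  have q: "1 \<le> q" "q \<le> q'"
    using cf_q_pos_le_Suc[OF y, of n] by (simp_all add: q_def q'_def)
  have "y - of_int (cf_p y n) / of_int (cf_q y n) = cf_err y n / q"
    using q by (simp add: cf_err_def q_def field_simps)
  then have "\<bar>y - of_int (cf_p y n) / of_int (cf_q y n)\<bar> = \<bar>cf_err y n\<bar> / q"
    using q by simp
  also have "\<dots> < 1 / (q' * q)"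
    using abs_cf_err_less[OF y, of n] q by (simp add: q'_def field_simps)
  also have "\<dots> \<le> 1 / q powr 2"
    using q by (simp add: frac_le power2_eq_square mult_right_mono)
  also have "\<dots> \<le> 1 / q powr t"
    using q \<open>t \<le> 2\<close> by (intro divide_left_mono powr_mono) auto
  finally show ?thesis by (simp add: q_def)
qed

definition approx_convergents :: "(int \<Rightarrow> int \<Rightarrow> bool) \<Rightarrow> real \<Rightarrow> real \<Rightarrow> nat set" where
  "approx_convergents S y t = {n. S (cf_p y n) (cf_q y n) \<and>
     \<bar>y - of_int (cf_p y n) / of_int (cf_q y n)\<bar> < 1 / of_int (cf_q y n) powr t}"

lemma infinite_approx_convergents_le_2:
  assumes y: "y \<notin> \<rat>" and "t \<le> 2"
    and S: "\<And>n. S (cf_p y n) (cf_q y n) \<or> S (cf_p y (Suc n)) (cf_q y (Suc n))"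
  shows "infinite (approx_convergents S y t)"
  unfolding infinite_nat_iff_unbounded_le
proof
  fix m
  from S[of m] have "m \<in> approx_convergents S y t \<or> Suc m \<in> approx_convergents S y t"
    using abs_cf_approx_less_powr[OF y \<open>t \<le> 2\<close>] by (auto simp: approx_convergents_def)
  then show "\<exists>n\<ge>m. n \<in> approx_convergents S y t"
    using le_Suc_eq by blast
qed

lemma eventually_mult_powr_less_powr:
  fixes a b C :: real
  assumes "a < b"
  shows "eventually (\<lambda>q. C * q powr a < q powr b) at_top"
proof -
  have "((\<lambda>q. q powr (a - b)) \<longlongrightarrow> 0) at_top"
    using assms by (intro tendsto_neg_powr filterlim_ident) auto
  then have "((\<lambda>q. \<bar>C\<bar> * q powr (a - b)) \<longlongrightarrow> 0) at_top"
    by (rule tendsto_mult_right_zero)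
  then have "eventually (\<lambda>q. \<bar>C\<bar> * q powr (a - b) < 1) at_top"
    by (rule order_tendstoD) simp
  with eventually_gt_at_top[of 0] show ?thesis
  proof eventually_elim
    case (elim q)
    have "C * q powr a \<le> \<bar>C\<bar> * q powr (a - b) * q powr b"
      by (simp add: mult.assoc mult_right_mono flip: powr_add)
    also have "\<dots> < q powr b"
      using elim by simp
    finally show ?case .
  qed
qed

lemma scaled_error_less_powr:
  fixes c e q Q t t' :: real
  assumes "0 < c" "0 < q" "0 < Q" "q \<le> 2 * Q" "0 \<le> t"
    and "e < 1 / Q powr t" and "c * 2 powr t * q powr t' < q powr t"
  shows "c * e < 1 / q powr t'"
proof -
  have "q powr t \<le> (2 * Q) powr t"
    using assms(2,4,5) by (intro powr_mono2) auto
  then have q_powr: "q powr t \<le> 2 powr t * Q powr t"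
    using assms(3) by (simp add: powr_mult)
  have "c * e < c / Q powr t"
    using mult_strict_left_mono[OF assms(6,1)] by simp
  also have "\<dots> \<le> c * 2 powr t / q powr t"
    using q_powr assms(1-3) by (simp add: field_simps)
  also have "\<dots> < 1 / q powr t'"
    using assms(2,7) by (simp add: field_simps)
  finally show ?thesis .
qed

text \<open>For an exponent t' > 2 the approximations produced by the correspondence are
  closer than 1/(2q^2), so Legendre's theorem makes them convergents of c z.\<close>

lemma infinite_approx_convergents_transfer:
  assumes z: "z \<notin> \<rat>" and cz: "c * z \<notin> \<rat>" and "0 < c"
    and corr: "\<And>P Q. 0 < Q \<Longrightarrow> coprime P Q \<Longrightarrow> S P Q \<Longrightarrow> \<exists>p q. 0 < q \<and> coprime p q \<and> S' p q
       \<and> q \<le> 2 * Q \<and> Q \<le> 2 * q \<and> of_int p / of_int q = c * (of_int P / of_int Q)"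
    and inf: "infinite (approx_convergents S z t)" and "2 < t'" "t' < t"
  shows "infinite (approx_convergents S' (c * z) t')"
  unfolding infinite_nat_iff_unbounded_le
proof
  fix B
  have "eventually (\<lambda>q. c * 2 powr t * q powr t' < q powr t \<and> 2 * q powr 2 < q powr t'
      \<and> of_int (cf_q (c * z) B) < q) at_top"
    using eventually_mult_powr_less_powr \<open>2 < t'\<close> \<open>t' < t\<close>
    by (intro eventually_conj eventually_gt_at_top) auto
  then obtain M where M: "\<And>q. M \<le> q \<Longrightarrow> c * 2 powr t * q powr t' < q powr t
      \<and> 2 * q powr 2 < q powr t' \<and> of_int (cf_q (c * z) B) < q"
    unfolding eventually_at_top_linorder by blast
  obtain n where n: "nat \<lceil>2 * M\<rceil> \<le> n" "n \<in> approx_convergents S z t"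
    using inf unfolding infinite_nat_iff_unbounded_le by blast
  define P Q where "P = cf_p z n" and "Q = cf_q z n"
  have "0 < Q" "coprime P Q" "S P Q" and approx: "\<bar>z - of_int P / of_int Q\<bar> < 1 / of_int Q powr t"
    using n(2) cf_q_pos[OF z, of n] coprime_cf_p_cf_q[of z n]
    by (auto simp: approx_convergents_def P_def Q_def)
  then obtain p q where "0 < q" "coprime p q" "S' p q" and q: "q \<le> 2 * Q" "Q \<le> 2 * q"
    and pq: "of_int p / of_int q = c * (of_int P / of_int Q)"
    using corr by blast
  have "2 * M \<le> of_int Q"
    using n(1) cf_q_ge_index[OF z, of n] by (simp add: Q_def)
  with q have "M \<le> of_int q"
    by linarith
  note M = M[OF this]
  have "c * z - of_int p / of_int q = c * (z - of_int P / of_int Q)"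
    by (simp only: pq right_diff_distrib)
  then have "\<bar>c * z - of_int p / of_int q\<bar> = c * \<bar>z - of_int P / of_int Q\<bar>"
    using \<open>0 < c\<close> by (simp add: abs_mult)
  also have "\<dots> < 1 / of_int q powr t'"
    using \<open>0 < c\<close> \<open>0 < q\<close> \<open>0 < Q\<close> q approx M \<open>2 < t'\<close> \<open>t' < t\<close>
    by (intro scaled_error_less_powr) auto
  finally have approx': "\<bar>c * z - of_int p / of_int q\<bar> < 1 / of_int q powr t'" .
  also have "\<dots> < 1 / (2 * of_int q ^ 2)"
    using M \<open>0 < q\<close> by (simp add: field_simps)
  finally obtain m where m: "cf_p (c * z) m = p" "cf_q (c * z) m = q"
    using legendre_convergent[OF cz \<open>0 < q\<close> \<open>coprime p q\<close>] by blast
  have "B < m"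
    using M m(2) by (intro cf_q_less_imp_index_less[OF cz]) simp
  moreover have "m \<in> approx_convergents S' (c * z) t'"
    using m \<open>S' p q\<close> approx' by (simp add: approx_convergents_def)
  ultimately show "\<exists>m\<ge>B. m \<in> approx_convergents S' (c * z) t'"
    by (intro exI[of _ m]) simp
qed

lemma odd_mod_4_cases:
  fixes q :: int
  shows "odd q \<Longrightarrow> q mod 4 = 1 \<or> q mod 4 = 3"
  by presburger

lemma reduced_fraction_double:
  fixes p q :: int
  assumes "0 < q" "coprime p q" "q mod 4 \<in> {0, 1, 3}"
  shows "\<exists>P Q. 0 < Q \<and> coprime P Q \<and> \<not> (odd P \<and> odd Q) \<and> Q \<le> 2 * q \<and> q \<le> 2 * Q
    \<and> of_int P / of_int Q = 2 * (of_int p / of_int q :: real)"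
proof (cases "odd q")
  case True
  then have "coprime (2 * p) q"
    using assms(2) by simp
  with True assms(1) show ?thesis
    by (intro exI[of _ "2 * p"] exI[of _ q]) auto
next
  case False
  with assms(3) have "q mod 4 = 0"
    by auto presburger+
  then have Q: "q = 2 * (q div 2)" "even (q div 2)"
    by presburger+
  with assms(2) have "coprime p (q div 2)"
    by (metis coprime_mult_right_iff)
  with Q assms(1) show ?thesis
    by (intro exI[of _ p] exI[of _ "q div 2"]) auto
qed

lemma reduced_fraction_halve:
  fixes P Q :: int
  assumes "0 < Q" "coprime P Q" "\<not> (odd P \<and> odd Q)"
  shows "\<exists>p q. 0 < q \<and> coprime p q \<and> q mod 4 \<in> {0, 1, 3} \<and> q \<le> 2 * Q \<and> Q \<le> 2 * q
    \<and> of_int p / of_int q = 1 / 2 * (of_int P / of_int Q :: real)"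
proof (cases "even P")
  case True
  then obtain p where "P = 2 * p" ..
  with assms(2) have "coprime p Q" "odd Q"
    by auto
  moreover from \<open>odd Q\<close> have "Q mod 4 = 1 \<or> Q mod 4 = 3"
    by (rule odd_mod_4_cases)
  ultimately show ?thesis
    using \<open>P = 2 * p\<close> assms(1)
    by (intro exI[of _ p] exI[of _ Q]) auto
next
  case False
  with assms(3) have "even Q" by simp
  with False assms(2) have "coprime P (2 * Q)" "(2 * Q) mod 4 = 0"
    by auto
  with assms(1) show ?thesis
    by (intro exI[of _ P] exI[of _ "2 * Q"]) auto
qed

lemma Sup_ereal_image_le_if_below:
  assumes "\<And>a a'. a \<in> A \<Longrightarrow> a' < a \<Longrightarrow> a' \<in> B"
  shows "Sup (ereal ` A) \<le> Sup (ereal ` B)"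
proof (rule Sup_least)
  fix z
  assume "z \<in> ereal ` A"
  then obtain a where "a \<in> A" "z = ereal a" by auto
  show "z \<le> Sup (ereal ` B)"
    unfolding \<open>z = ereal a\<close>
  proof (rule dense_le)
    fix w
    assume w: "w < ereal a"
    show "w \<le> Sup (ereal ` B)"
    proof (cases w)
      case (real r)
      with w assms \<open>a \<in> A\<close> have "r \<in> B" by auto
      with real show ?thesis by (simp add: Sup_upper)
    qed (use w in auto)
  qed
qed

abbreviation gamma_convergents :: "real \<Rightarrow> real \<Rightarrow> nat set" where
  "gamma_convergents \<equiv> approx_convergents (\<lambda>p q. q mod 4 \<in> {0, 1, 3})"

abbreviation tau_convergents :: "real \<Rightarrow> real \<Rightarrow> nat set" where
  "tau_convergents \<equiv> approx_convergents (\<lambda>p q. \<not> (odd p \<and> odd q))"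

lemma gamma_exp_eq_Sup: "gamma_exp y = Sup (ereal ` {g. infinite (gamma_convergents y g)})"
  by (simp add: gamma_exp_def approx_convergents_def)

lemma tau_exp_eq_Sup: "tau_exp y = Sup (ereal ` {t. infinite (tau_convergents y t)})"
  by (simp add: tau_exp_def approx_convergents_def)

lemma irrational_double: "x \<notin> \<rat> \<Longrightarrow> 2 * x \<notin> \<rat>"
  using Rats_divide[of "2 * x" 2] by auto

lemma infinite_tau_convergents_double:
  assumes x: "x \<notin> \<rat>" and "infinite (gamma_convergents x g)" "t < g"
  shows "infinite (tau_convergents (2 * x) t)"
proof (cases "t \<le> 2")
  case True
  with irrational_double[OF x] show ?thesis
    by (rule infinite_approx_convergents_le_2) (rule cf_not_both_odd_or_Suc)
next
  case False
  show ?thesis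
    by (rule infinite_approx_convergents_transfer[OF x irrational_double[OF x] _
          reduced_fraction_double assms(2)])
      (use False assms(3) in auto)
qed

lemma infinite_gamma_convergents_half:
  assumes x: "x \<notin> \<rat>" and "infinite (tau_convergents (2 * x) t)" "g < t"
  shows "infinite (gamma_convergents x g)"
proof (cases "g \<le> 2")
  case True
  have "cf_q x n mod 4 \<in> {0, 1, 3} \<or> cf_q x (Suc n) mod 4 \<in> {0, 1, 3}" for n
    using odd_cf_q_or_Suc[of x n] by (auto dest: odd_mod_4_cases)
  with x True show ?thesis
    by (rule infinite_approx_convergents_le_2)
next
  case False
  have "infinite (gamma_convergents (1 / 2 * (2 * x)) g)"
    by (rule infinite_approx_convergents_transfer[OF irrational_double[OF x] _ _
          reduced_fraction_halve assms(2)])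
      (use x False assms(3) in auto)
  then show ?thesis
    by simp
qed

theorem lemma3p1:
  fixes x :: real
  assumes "x \<notin> \<rat>"
  shows "gamma_exp x = tau_exp (2 * x)"
  unfolding gamma_exp_eq_Sup tau_exp_eq_Sup
proof (rule antisym)
  show "Sup (ereal ` {g. infinite (gamma_convergents x g)})
      \<le> Sup (ereal ` {t. infinite (tau_convergents (2 * x) t)})"
    using infinite_tau_convergents_double[OF assms] by (intro Sup_ereal_image_le_if_below) auto
  show "Sup (ereal ` {t. infinite (tau_convergents (2 * x) t)})
      \<le> Sup (ereal ` {g. infinite (gamma_convergents x g)})"
    using infinite_gamma_convergents_half[OF assms] by (intro Sup_ereal_image_le_if_below) auto
qed

end
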